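(* Let $$A=\begin{pmatrix}1&1&2&2\\1&0&1&2\\2&1&0&1\\2&2&1&1\end{pmatrix}.$$ Then $\operatorname{rk}(A)=\operatorname{rk}_+(A)=3$ and $\operatorname{st}_+(A)=4$.
   Context: The SNT-rank $\operatorname{st}_+(A)$ of a symmetric entrywise nonnegative $n\times n$ matrix $A$ is the minimal $k$ such that $A=BCB^T$ with $B$ an entrywise nonnegative $n\times k$ matrix and $C$ a symmetric entrywise nonnegative $k\times k$ matrix. $\operatorname{rk}_+(A)$ is the minimal $k$ such that $A=UV^T$ with $U,V$ entrywise nonnegative $n\times k$ matrices. *)

theory Defs
  imports Jordan_Normal_Form.DL_Rank_Submatrix
begin

definition nonneg_mat :: "real mat \<Rightarrow> bool" where
  "nonneg_mat M \<longleftrightarrow> (\<forall>i < dim_row M. \<forall>j < dim_col M. M $$ (i, j) \<ge> 0)"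

definition real_rank :: "real mat \<Rightarrow> nat" where
  "real_rank A = vec_space.rank (dim_row A) A"

definition nonneg_rank :: "real mat \<Rightarrow> nat" where
  "nonneg_rank A = (LEAST k. \<exists>U V. U \<in> carrier_mat (dim_row A) k \<and> V \<in> carrier_mat (dim_col A) k
      \<and> nonneg_mat U \<and> nonneg_mat V \<and> A = U * transpose_mat V)"

definition snt_rank :: "real mat \<Rightarrow> nat" where
  "snt_rank A = (LEAST k. \<exists>B C. B \<in> carrier_mat (dim_row A) k \<and> C \<in> carrier_mat k k
      \<and> nonneg_mat B \<and> nonneg_mat C \<and> transpose_mat C = C
      \<and> A = B * C * transpose_mat B)"

definition A7 :: "real mat" where
  "A7 = mat_of_rows_list 4 [[1,1,2,2],[1,0,1,2],[2,1,0,1],[2,2,1,1]]"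

end

theory Submission
  imports Defs
begin

text \<open>
  The kernel of A is spanned by (1,-1,1,-1) and its leading 3x3 minor is nonzero, so rk(A) = 3.
  A factorisation A = X Y^T through k dimensions restricts to one of the nonsingular leading
  minor, so k >= 3; explicit nonnegative 4x3 factors then give rk_+(A) = 3, and A = 1 A 1 gives
  st_+(A) <= 4.

  It remains to exclude A = B C B^T with B in R^(4x3). The leading minor forces C to be
  nonsingular, and then A (1,-1,1,-1) = 0 forces the rows of B to satisfy b3 = b0 - b1 + b2.
  Since b1 C b1 = A11 = 0 and everything is nonnegative, the support of b1 indexes a zero
  principal block of C, which for a nonsingular 3x3 matrix has size at most 1; likewise for b2.
  As b1 C b2 = A12 = 1, the two supports are disjoint, so b3 >= 0 gives b1 <= b0 entrywise.
  But then 0 <= (b0 - b1) C (b0 - b1) = A00 - 2 A01 + A11 = -1.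
\<close>

lemma pick_lessThan: "i < n \<Longrightarrow> pick {..<n} i = i"
  using pick_card_in_set[of i "{..<n}"]
  by (simp add: Collect_conj_eq Int_absorb1 flip: lessThan_def)

lemma card_lessThan_prefix: "m \<le> n \<Longrightarrow> card {i. i < n \<and> i \<in> {..<m}} = m"
  by (simp add: Collect_conj_eq Int_absorb1 flip: lessThan_def)

lemma submatrix_lessThan_index:
  assumes "m \<le> dim_row A" "m \<le> dim_col A" "i < m" "j < m"
  shows "submatrix A {..<m} {..<m} $$ (i, j) = A $$ (i, j)"
  using assms card_lessThan_prefix[of m "dim_row A"] card_lessThan_prefix[of m "dim_col A"]
  by (subst submatrix_index) (simp_all add: pick_lessThan)

lemma submatrix_lessThan_carrier:
  "A \<in> carrier_mat n n' \<Longrightarrow> m \<le> n \<Longrightarrow> m \<le> n' \<Longrightarrow> submatrix A {..<m} {..<m} \<in> carrier_mat m m"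
  by (intro carrier_matI; simp only: dim_submatrix carrier_matD card_lessThan_prefix)

lemma submatrix_mult_rows:
  assumes "X \<in> carrier_mat n k" "Y \<in> carrier_mat k l"
  shows "submatrix (X * Y) I UNIV = submatrix X I UNIV * Y"
proof (rule eq_matI)
  fix i j assume "i < dim_row (submatrix X I UNIV * Y)" "j < dim_col (submatrix X I UNIV * Y)"
  with assms show "submatrix (X * Y) I UNIV $$ (i, j) = (submatrix X I UNIV * Y) $$ (i, j)"
    by (simp add: submatrix_index dim_submatrix row_submatrix_UNIV pick_UNIV pick_le)
qed (use assms in \<open>simp_all add: dim_submatrix\<close>)

lemma submatrix_mult_transpose:
  assumes "X \<in> carrier_mat n k" "Y \<in> carrier_mat n k"
  shows "submatrix (X * transpose_mat Y) I I
    = submatrix X I UNIV * transpose_mat (submatrix Y I UNIV)"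
proof (rule eq_matI)
  fix i j assume "i < dim_row (submatrix X I UNIV * transpose_mat (submatrix Y I UNIV))"
    "j < dim_col (submatrix X I UNIV * transpose_mat (submatrix Y I UNIV))"
  with assms show "submatrix (X * transpose_mat Y) I I $$ (i, j)
      = (submatrix X I UNIV * transpose_mat (submatrix Y I UNIV)) $$ (i, j)"
    by (simp add: submatrix_index dim_submatrix row_submatrix_UNIV pick_le)
qed (use assms in \<open>simp_all add: dim_submatrix\<close>)

lemma submatrix_rows_carrier:
  "X \<in> carrier_mat n k \<Longrightarrow> submatrix X I UNIV \<in> carrier_mat (card {i. i < n \<and> i \<in> I}) k"
  by (intro carrier_matI; simp only: dim_submatrix carrier_matD; simp)

lemma det_mult_transpose_eq_0:
  fixes X Y :: "'a :: field mat"
  assumes X: "X \<in> carrier_mat n k" and Y: "Y \<in> carrier_mat n k" and "k < n"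
  shows "det (X * transpose_mat Y) = 0"
proof -
  define pad where "pad Z = mat n n (\<lambda>(i, l). if l < k then Z $$ (i, l) else 0)" for Z :: "'a mat"
  have pad: "pad Z \<in> carrier_mat n n" for Z by (simp add: pad_def)
  have "X * transpose_mat Y = pad X * transpose_mat (pad Y)"
  proof (rule eq_matI)
    fix i j
    assume ij: "i < dim_row (pad X * transpose_mat (pad Y))"
      "j < dim_col (pad X * transpose_mat (pad Y))"
    have "(pad X * transpose_mat (pad Y)) $$ (i, j) = (\<Sum>l<n. pad X $$ (i, l) * pad Y $$ (j, l))"
      using ij by (simp add: pad_def scalar_prod_def atLeast0LessThan)
    also have "\<dots> = (\<Sum>l<k. X $$ (i, l) * Y $$ (j, l))"
      using ij \<open>k < n\<close> by (intro sum.mono_neutral_cong_right) (auto simp: pad_def)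
    also have "\<dots> = (X * transpose_mat Y) $$ (i, j)"
      using ij X Y by (simp add: pad_def scalar_prod_def atLeast0LessThan)
    finally show "(X * transpose_mat Y) $$ (i, j) = (pad X * transpose_mat (pad Y)) $$ (i, j)" ..
  qed (use X Y in \<open>simp_all add: pad_def\<close>)
  moreover have "det (pad X) = 0"
  proof -
    have "pad X *\<^sub>v unit_vec n (n - 1) = 0\<^sub>v n"
      using \<open>k < n\<close> by (intro eq_vecI) (auto simp: pad_def)
    then show ?thesis unfolding det_0_iff_vec_prod_zero_field[OF pad]
      using \<open>k < n\<close> by (intro exI[of _ "unit_vec n (n - 1)"]) simp
  qed
  ultimately show ?thesis
    using det_mult[OF pad, of "transpose_mat (pad Y)"] pad by simp
qed

lemma minor_card_le_inner_dim:
  fixes X Y :: "'a :: field mat"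
  assumes X: "X \<in> carrier_mat n k" and Y: "Y \<in> carrier_mat n k"
    and minor: "det (submatrix (X * transpose_mat Y) I I) \<noteq> 0"
  shows "card {i. i < n \<and> i \<in> I} \<le> k"
proof (rule ccontr)
  assume "\<not> card {i. i < n \<and> i \<in> I} \<le> k"
  then have "k < card {i. i < n \<and> i \<in> I}" by simp
  then have "det (submatrix X I UNIV * transpose_mat (submatrix Y I UNIV)) = 0"
    by (rule det_mult_transpose_eq_0[OF submatrix_rows_carrier[OF X] submatrix_rows_carrier[OF Y]])
  then show False
    using minor submatrix_mult_transpose[OF X Y] by simp
qed

lemma mult_transpose_kernel:
  fixes X Y :: "'a :: field mat"
  assumes X: "X \<in> carrier_mat n k" and Y: "Y \<in> carrier_mat n k" and v: "v \<in> carrier_vec n"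
    and minor: "det (submatrix X I UNIV) \<noteq> 0"
    and kernel: "X * transpose_mat Y *\<^sub>v v = 0\<^sub>v n"
  shows "transpose_mat Y *\<^sub>v v = 0\<^sub>v k"
proof -
  let ?S = "submatrix X I UNIV" and ?w = "transpose_mat Y *\<^sub>v v"
  have "?S \<in> carrier_mat (card {i. i < n \<and> i \<in> I}) k"
    by (rule submatrix_rows_carrier[OF X])
  moreover from this have card: "card {i. i < n \<and> i \<in> I} = k"
    \<comment> \<open>non-square matrices have determinant 0\<close>
    using minor unfolding det_def by (auto split: if_splits)
  ultimately have S: "?S \<in> carrier_mat k k" by simp
  have w: "?w \<in> carrier_vec k" using Y v by simp
  have Xw: "X *\<^sub>v ?w = 0\<^sub>v n"
    using kernel assoc_mult_mat_vec[of X n k "transpose_mat Y" n v] X Y v by simp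
  have "?S *\<^sub>v ?w = 0\<^sub>v k"
  proof (rule eq_vecI)
    fix i assume i: "i < dim_vec (0\<^sub>v k :: 'a vec)"
    then have "i < card {i. i < n \<and> i \<in> I}" using card by simp
    then have "pick I i < n" "(?S *\<^sub>v ?w) $ i = (X *\<^sub>v ?w) $ pick I i"
      using S X i by (simp_all add: pick_le row_submatrix_UNIV)
    then show "(?S *\<^sub>v ?w) $ i = 0\<^sub>v k $ i"
      using Xw i by simp
  qed (use S in simp)
  then show ?thesis using det_0_iff_vec_prod_zero_field[OF S] minor w by blast
qed

lemma det_eq_0_if_two_cols_supported_in_row:
  fixes C :: "'a :: field mat"
  assumes C: "C \<in> carrier_mat n n" and "l < n" "m < n" "l \<noteq> m" "p < n"
    and supp: "\<And>i. i < n \<Longrightarrow> i \<noteq> p \<Longrightarrow> C $$ (i, l) = 0 \<and> C $$ (i, m) = 0"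
  shows "det C = 0"
proof (cases "C $$ (p, l) = 0")
  case True
  have "C *\<^sub>v unit_vec n l = 0\<^sub>v n"
    using C supp True \<open>l < n\<close> by (intro eq_vecI) auto
  then show ?thesis
    unfolding det_0_iff_vec_prod_zero_field[OF C] using \<open>l < n\<close>
    by (intro exI[of _ "unit_vec n l"]) simp
next
  case False
  define v where
    "v = vec n (\<lambda>j. (if j = l then C $$ (p, m) else 0) - (if j = m then C $$ (p, l) else 0))"
  have "(C *\<^sub>v v) $ i = C $$ (i, l) * C $$ (p, m) - C $$ (i, m) * C $$ (p, l)" if "i < n" for i
  proof -
    have "(C *\<^sub>v v) $ i = (\<Sum>j<n. (if j = l then C $$ (i, l) * C $$ (p, m) else 0)
        - (if j = m then C $$ (i, m) * C $$ (p, l) else 0))"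
      using C that
      by (auto simp: v_def scalar_prod_def atLeast0LessThan right_diff_distrib intro!: sum.cong)
    then show ?thesis using \<open>l < n\<close> \<open>m < n\<close> by (simp add: sum_subtractf)
  qed
  moreover have "C $$ (i, l) * C $$ (p, m) = C $$ (i, m) * C $$ (p, l)" if "i < n" for i
    using supp[OF that] by (cases "i = p") auto
  ultimately have "C *\<^sub>v v = 0\<^sub>v n"
    using C by (intro eq_vecI) (auto simp: v_def)
  moreover have "v \<noteq> 0\<^sub>v n"
  proof
    assume "v = 0\<^sub>v n"
    then have "v $ m = 0" using \<open>m < n\<close> by simp
    then show False using False \<open>m < n\<close> \<open>l \<noteq> m\<close> by (simp add: v_def)
  qed
  ultimately show ?thesis
    unfolding det_0_iff_vec_prod_zero_field[OF C] by (intro exI[of _ v]) (simp add: v_def)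
qed

definition nonneg_vec :: "real vec \<Rightarrow> bool" where
  "nonneg_vec v \<longleftrightarrow> (\<forall>i < dim_vec v. v $ i \<ge> 0)"

lemma nonneg_vec_row: "nonneg_mat B \<Longrightarrow> i < dim_row B \<Longrightarrow> nonneg_vec (row B i)"
  by (simp add: nonneg_mat_def nonneg_vec_def)

lemma scalar_prod_mult_mat_vec_sum:
  fixes C :: "'a :: comm_semiring_0 mat"
  assumes "C \<in> carrier_mat k k" "u \<in> carrier_vec k" "v \<in> carrier_vec k"
  shows "u \<bullet> (C *\<^sub>v v) = (\<Sum>l<k. \<Sum>m<k. u $ l * C $$ (l, m) * v $ m)"
  using assms by (simp add: scalar_prod_def sum_distrib_left mult.assoc atLeast0LessThan)

lemma index_mult_mult_transpose:
  fixes B C :: "'a :: comm_semiring_0 mat"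
  assumes "B \<in> carrier_mat n k" "C \<in> carrier_mat k k" "i < n" "j < n"
  shows "(B * C * transpose_mat B) $$ (i, j) = row B i \<bullet> (C *\<^sub>v row B j)"
  using assms by (simp add: scalar_prod_def)

lemma bilinear_nonneg:
  assumes "C \<in> carrier_mat k k" "u \<in> carrier_vec k" "v \<in> carrier_vec k"
    and "nonneg_mat C" "nonneg_vec u" "nonneg_vec v"
  shows "u \<bullet> (C *\<^sub>v v) \<ge> 0"
  using assms unfolding nonneg_mat_def nonneg_vec_def
  by (auto simp: scalar_prod_mult_mat_vec_sum intro!: sum_nonneg)

lemma isotropic_nonneg_zero_entry:
  assumes C: "C \<in> carrier_mat k k" and u: "u \<in> carrier_vec k"
    and nC: "nonneg_mat C" and nu: "nonneg_vec u"
    and iso: "u \<bullet> (C *\<^sub>v u) = 0"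
    and lm: "l < k" "m < k" "u $ l \<noteq> 0" "u $ m \<noteq> 0"
  shows "C $$ (l, m) = 0"
proof -
  have terms: "u $ l' * C $$ (l', m') * u $ m' \<ge> 0" if "l' < k" "m' < k" for l' m'
    using that C u nC nu unfolding nonneg_mat_def nonneg_vec_def by simp
  have rows: "(\<Sum>m'<k. u $ l' * C $$ (l', m') * u $ m') \<ge> 0" if "l' < k" for l'
    using terms that by (auto intro: sum_nonneg)
  have "\<forall>l'\<in>{..<k}. (\<Sum>m'<k. u $ l' * C $$ (l', m') * u $ m') = 0"
    using iso rows
    by (subst sum_nonneg_eq_0_iff[symmetric]) (auto simp: scalar_prod_mult_mat_vec_sum[OF C u u])
  then have "\<forall>m'\<in>{..<k}. u $ l * C $$ (l, m') * u $ m' = 0"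
    using terms lm(1) by (subst sum_nonneg_eq_0_iff[symmetric]) auto
  then show ?thesis using lm by auto
qed

lemma bilinear_single_support:
  fixes C :: "'a :: comm_semiring_0 mat"
  assumes C: "C \<in> carrier_mat k k" and u: "u \<in> carrier_vec k" and v: "v \<in> carrier_vec k"
    and "l < k" and supp: "\<And>m. m < k \<Longrightarrow> m \<noteq> l \<Longrightarrow> u $ m = 0 \<and> v $ m = 0"
  shows "u \<bullet> (C *\<^sub>v v) = u $ l * C $$ (l, l) * v $ l"
proof -
  have "(\<Sum>m<k. f m) = f l" if "\<And>m. m < k \<Longrightarrow> m \<noteq> l \<Longrightarrow> f m = 0" for f :: "nat \<Rightarrow> 'a"
    using that \<open>l < k\<close> by (simp add: sum.remove[of "{..<k}" l])
  then show ?thesis using supp by (simp add: scalar_prod_mult_mat_vec_sum[OF C u v])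
qed

lemma bilinear_diff_symmetric:
  fixes C :: "'a :: comm_ring_1 mat"
  assumes C: "C \<in> carrier_mat k k" and sym: "transpose_mat C = C"
    and u: "u \<in> carrier_vec k" and v: "v \<in> carrier_vec k"
  shows "(u - v) \<bullet> (C *\<^sub>v (u - v))
    = u \<bullet> (C *\<^sub>v u) - 2 * (u \<bullet> (C *\<^sub>v v)) + v \<bullet> (C *\<^sub>v v)"
proof -
  have "v \<bullet> (C *\<^sub>v u) = u \<bullet> (C *\<^sub>v v)"
    using transpose_vec_mult_scalar[OF C u v] comm_scalar_prod[of "C *\<^sub>v v" k u] sym C u v by simp
  then show ?thesis
    using C u v by (simp add: algebra_simps scalar_prod_minus_distrib minus_scalar_prod_distrib)
qed

lemma isotropic_vec_single_support_3:
  assumes C: "C \<in> carrier_mat 3 3" and "det C \<noteq> 0" and nC: "nonneg_mat C"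
    and u: "u \<in> carrier_vec 3" and nu: "nonneg_vec u" and iso: "u \<bullet> (C *\<^sub>v u) = 0"
    and lm: "l < 3" "m < 3" "l \<noteq> m"
  shows "u $ l = 0 \<or> u $ m = 0"
proof (rule ccontr)
  assume "\<not> (u $ l = 0 \<or> u $ m = 0)"
  then have zero: "C $$ (i, j) = 0" if "i \<in> {l, m}" "j \<in> {l, m}" for i j
    using isotropic_nonneg_zero_entry[OF C u nC nu iso] that lm by auto
  define p where "p = 3 - l - m"
  have "i \<in> {l, m}" if "i < 3" "i \<noteq> p" for i
    using lm that unfolding p_def by auto
  then have "det C = 0"
    using det_eq_0_if_two_cols_supported_in_row[OF C lm, of p] zero lm by (auto simp: p_def)
  with \<open>det C \<noteq> 0\<close> show False ..
qed

lemma isotropic_pair_bilinear_bound_3: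
  assumes C: "C \<in> carrier_mat 3 3" and "det C \<noteq> 0" and sym: "transpose_mat C = C"
    and nC: "nonneg_mat C"
    and u: "u \<in> carrier_vec 3" and v: "v \<in> carrier_vec 3" and w: "w \<in> carrier_vec 3"
    and nu: "nonneg_vec u" and nv: "nonneg_vec v" and nw: "nonneg_vec w"
    and n_uvw: "nonneg_vec (u - v + w)"
    and iso_v: "v \<bullet> (C *\<^sub>v v) = 0" and iso_w: "w \<bullet> (C *\<^sub>v w) = 0"
    and vw: "v \<bullet> (C *\<^sub>v w) \<noteq> 0"
  shows "2 * (u \<bullet> (C *\<^sub>v v)) \<le> u \<bullet> (C *\<^sub>v u)"
proof -
  have disjoint: "v $ l = 0 \<or> w $ l = 0" if l: "l < 3" for l
  proof (rule ccontr)
    assume nz: "\<not> (v $ l = 0 \<or> w $ l = 0)"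
    have "v $ m = 0 \<and> w $ m = 0" if "m < 3" "m \<noteq> l" for m
      using isotropic_vec_single_support_3[OF C \<open>det C \<noteq> 0\<close> nC] v w nv nw iso_v iso_w l that nz
      by metis
    then have "v \<bullet> (C *\<^sub>v w) = v $ l * C $$ (l, l) * w $ l"
      by (rule bilinear_single_support[OF C v w l])
    moreover have "C $$ (l, l) = 0"
      using isotropic_nonneg_zero_entry[OF C v nC nv iso_v l l] nz by simp
    ultimately show False using vw by simp
  qed
  have "nonneg_vec (u - v)"
    unfolding nonneg_vec_def
  proof (intro allI impI)
    fix l assume "l < dim_vec (u - v)"
    then have l: "l < 3" using u v by simp
    show "(u - v) $ l \<ge> 0"
      using disjoint[OF l] nu n_uvw u v w l unfolding nonneg_vec_def by auto
  qed
  then have "(u - v) \<bullet> (C *\<^sub>v (u - v)) \<ge> 0"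
    using bilinear_nonneg[OF C _ _ nC] u v by simp
  then show ?thesis
    using bilinear_diff_symmetric[OF C sym u v] iso_v by simp
qed

lemma A7_carrier: "A7 \<in> carrier_mat 4 4"
  by (simp add: A7_def mat_of_rows_list_def carrier_matI)

lemma A7_kernel: "A7 *\<^sub>v vec 4 (\<lambda>i. (-1) ^ i) = 0\<^sub>v 4"
proof (rule eq_vecI)
  fix i assume "i < dim_vec (0\<^sub>v 4 :: real vec)"
  then have "i \<in> {0, 1, 2, 3}" by auto
  then show "(A7 *\<^sub>v vec 4 (\<lambda>i. (-1) ^ i)) $ i = 0\<^sub>v 4 $ i"
    by (auto simp: A7_def mat_of_rows_list_def scalar_prod_def atLeast0LessThan numeral_eq_Suc)
qed (simp add: A7_def mat_of_rows_list_def)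

lemma det_A7: "det A7 = 0"
proof -
  have "vec 4 (\<lambda>i. (-1) ^ i) \<noteq> (0\<^sub>v 4 :: real vec)"
    by (metis index_vec index_zero_vec(1) one_neq_zero power_0 zero_less_numeral)
  then show ?thesis
    unfolding det_0_iff_vec_prod_zero_field[OF A7_carrier] using A7_kernel
    by (intro exI[of _ "vec 4 (\<lambda>i. (-1) ^ i)"]) simp
qed

lemma A7_leading_minor: "det (submatrix A7 {..<3} {..<3}) \<noteq> 0"
proof -
  let ?G = "submatrix A7 {..<3} {..<3}"
  have G: "?G \<in> carrier_mat 3 3"
    by (rule submatrix_lessThan_carrier[OF A7_carrier]) simp_all
  have "v = 0\<^sub>v 3" if v: "v \<in> carrier_vec 3" and Gv: "?G *\<^sub>v v = 0\<^sub>v 3" for v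
  proof -
    have "(\<Sum>j<3. A7 $$ (i, j) * v $ j) = 0" if "i < 3" for i
    proof -
      have "(?G *\<^sub>v v) $ i = (\<Sum>j<3. ?G $$ (i, j) * v $ j)"
        using G v that by (simp add: scalar_prod_def atLeast0LessThan)
      also have "\<dots> = (\<Sum>j<3. A7 $$ (i, j) * v $ j)"
        using that A7_carrier by (intro sum.cong) (simp_all add: submatrix_lessThan_index)
      finally show ?thesis using Gv that by simp
    qed
    from this[of 0] this[of 1] this[of 2]
    have "v $ 0 + v $ 1 + 2 * v $ 2 = 0" "v $ 0 + v $ 2 = 0" "2 * v $ 0 + v $ 1 = 0"
      by (simp_all add: A7_def mat_of_rows_list_def eval_nat_numeral)
    then have "v $ i = 0" if "i < 3" for i
      using that by (auto simp: less_Suc_eq numeral_eq_Suc)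
    then show ?thesis using v by (intro eq_vecI) auto
  qed
  then show ?thesis using det_0_iff_vec_prod_zero_field[OF G] by blast
qed

lemma real_rank_A7: "real_rank A7 = 3"
proof -
  have "vec_space.rank 4 A7 \<le> 4"
    by (rule vec_space.rank_le_nc[OF A7_carrier])
  moreover have "vec_space.rank 4 A7 \<noteq> 4"
    using vec_space.det_rank_iff[OF A7_carrier] det_A7 by simp
  moreover have "3 \<le> vec_space.rank 4 A7"
    using vec_space.rank_gt_minor[OF A7_carrier A7_leading_minor] card_lessThan_prefix[of 3 4]
    by simp
  ultimately show ?thesis
    using A7_carrier unfolding real_rank_def by auto
qed

lemma A7_factorization_inner_dim:
  assumes "X \<in> carrier_mat 4 k" "Y \<in> carrier_mat 4 k" "A7 = X * transpose_mat Y"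
  shows "3 \<le> k"
  using minor_card_le_inner_dim[OF assms(1,2), of "{..<3}"] A7_leading_minor assms(3)
    card_lessThan_prefix[of 3 4]
  by simp

lemma nonneg_rank_A7: "nonneg_rank A7 = 3"
proof -
  define U :: "real mat" where "U = mat_of_rows_list 3 [[1, 0, 1], [1, 0, 0], [0, 1, 0], [0, 1, 1]]"
  define V :: "real mat" where "V = mat_of_rows_list 3 [[1, 2, 0], [0, 1, 1], [1, 0, 1], [2, 1, 0]]"
  have U: "U \<in> carrier_mat 4 3" and V: "V \<in> carrier_mat 4 3"
    by (simp_all add: U_def V_def mat_of_rows_list_def carrier_matI)
  have "nonneg_mat U" "nonneg_mat V"
    by (auto simp: nonneg_mat_def U_def V_def mat_of_rows_list_def less_Suc_eq numeral_eq_Suc)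
  moreover have "A7 = U * transpose_mat V"
  proof (rule eq_matI)
    fix i j assume "i < dim_row (U * transpose_mat V)" "j < dim_col (U * transpose_mat V)"
    then have "i \<in> {0, 1, 2, 3}" "j \<in> {0, 1, 2, 3}" using U V by auto
    then show "A7 $$ (i, j) = (U * transpose_mat V) $$ (i, j)"
      using U V by (auto simp: A7_def U_def V_def mat_of_rows_list_def scalar_prod_def
          atLeast0LessThan numeral_eq_Suc)
  qed (use U V A7_carrier in auto)
  ultimately show ?thesis
    using U V A7_carrier A7_factorization_inner_dim unfolding nonneg_rank_def
    by (intro Least_equality) auto
qed

lemma A7_factorization_3_minor:
  assumes X: "X \<in> carrier_mat 4 3" and Y: "Y \<in> carrier_mat 4 3" and A: "A7 = X * transpose_mat Y"
  shows "det (submatrix X {..<3} UNIV) \<noteq> 0"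
proof -
  let ?I = "{..<3}"
  have sub: "submatrix Z ?I UNIV \<in> carrier_mat 3 3" if "Z \<in> carrier_mat 4 3" for Z
    using submatrix_rows_carrier[OF that, of ?I] card_lessThan_prefix[of 3 4] by simp
  have "det (submatrix A7 ?I ?I) = det (submatrix X ?I UNIV) * det (submatrix Y ?I UNIV)"
    unfolding A submatrix_mult_transpose[OF X Y]
    using sub[OF X] sub[OF Y] by (simp add: det_mult[of _ 3] det_transpose)
  then show ?thesis using A7_leading_minor by auto
qed

lemma A7_factorization_3_rows:
  assumes X: "X \<in> carrier_mat 4 3" and Y: "Y \<in> carrier_mat 4 3" and A: "A7 = X * transpose_mat Y"
  shows "row Y 3 = row Y 0 - row Y 1 + row Y 2"
proof -
  let ?x = "vec 4 (\<lambda>i. (-1) ^ i) :: real vec"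
  have kernel: "transpose_mat Y *\<^sub>v ?x = 0\<^sub>v 3"
    by (rule mult_transpose_kernel[OF X Y _ A7_factorization_3_minor[OF X Y A]])
      (use A7_kernel A in simp_all)
  have "Y $$ (0, l) - Y $$ (1, l) + Y $$ (2, l) - Y $$ (3, l) = 0" if "l < 3" for l
  proof -
    have "(transpose_mat Y *\<^sub>v ?x) $ l = 0" using kernel that by simp
    then show ?thesis using Y that by (simp add: scalar_prod_def atLeast0LessThan numeral_eq_Suc)
  qed
  then show ?thesis using Y by (intro eq_vecI) auto
qed

lemma no_snt_factorization_A7_3:
  assumes B: "B \<in> carrier_mat 4 3" and C: "C \<in> carrier_mat 3 3"
    and nB: "nonneg_mat B" and nC: "nonneg_mat C" and sym: "transpose_mat C = C"
    and A: "A7 = B * C * transpose_mat B"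
  shows False
proof -
  have BC: "B * C \<in> carrier_mat 4 3" using B C by simp
  have "det (submatrix B {..<3} UNIV * C) \<noteq> 0"
    using A7_factorization_3_minor[OF BC B A] by (simp add: submatrix_mult_rows[OF B C])
  then have "det C \<noteq> 0"
    using det_mult[OF _ C, of "submatrix B {..<3} UNIV"] submatrix_rows_carrier[OF B, of "{..<3}"]
      card_lessThan_prefix[of 3 4] by auto
  have rows: "row B i \<in> carrier_vec 3" "nonneg_vec (row B i)" if "i < 4" for i
    using B nonneg_vec_row[OF nB] that by auto
  have "nonneg_vec (row B 0 - row B 1 + row B 2)"
    using rows(2)[of 3] A7_factorization_3_rows[OF BC B A] by simp
  have gram: "row B i \<bullet> (C *\<^sub>v row B j) = A7 $$ (i, j)" if "i < 4" "j < 4" for i j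
    unfolding A by (rule index_mult_mult_transpose[OF B C that, symmetric])
  have "2 * (row B 0 \<bullet> (C *\<^sub>v row B 1)) \<le> row B 0 \<bullet> (C *\<^sub>v row B 0)"
  proof (rule isotropic_pair_bilinear_bound_3[OF C \<open>det C \<noteq> 0\<close> sym nC])
    show "row B 1 \<bullet> (C *\<^sub>v row B 1) = 0" "row B 2 \<bullet> (C *\<^sub>v row B 2) = 0"
      "row B 1 \<bullet> (C *\<^sub>v row B 2) \<noteq> 0"
      by (simp_all add: gram A7_def mat_of_rows_list_def)
  qed (use rows \<open>nonneg_vec (row B 0 - row B 1 + row B 2)\<close> in simp_all)
  then show False
    by (simp add: gram A7_def mat_of_rows_list_def)
qed

lemma snt_rank_A7: "snt_rank A7 = 4"
  unfolding snt_rank_def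
proof (rule Least_equality)
  have "transpose_mat A7 = A7"
    by (rule eq_matI) (auto simp: A7_def mat_of_rows_list_def less_Suc_eq numeral_eq_Suc)
  moreover have "nonneg_mat A7"
    by (auto simp: nonneg_mat_def A7_def mat_of_rows_list_def less_Suc_eq numeral_eq_Suc)
  moreover have "nonneg_mat (1\<^sub>m 4 :: real mat)"
    by (simp add: nonneg_mat_def)
  moreover have "A7 = 1\<^sub>m 4 * A7 * transpose_mat (1\<^sub>m 4)"
    using A7_carrier by simp
  ultimately show "\<exists>B C. B \<in> carrier_mat (dim_row A7) 4 \<and> C \<in> carrier_mat 4 4
      \<and> nonneg_mat B \<and> nonneg_mat C \<and> transpose_mat C = C \<and> A7 = B * C * transpose_mat B"
    using A7_carrier by (intro exI[of _ "1\<^sub>m 4"] exI[of _ A7]) auto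
next
  fix k
  assume "\<exists>B C. B \<in> carrier_mat (dim_row A7) k \<and> C \<in> carrier_mat k k
      \<and> nonneg_mat B \<and> nonneg_mat C \<and> transpose_mat C = C \<and> A7 = B * C * transpose_mat B"
  then obtain B C where B: "B \<in> carrier_mat 4 k" and C: "C \<in> carrier_mat k k"
    and "nonneg_mat B" "nonneg_mat C" "transpose_mat C = C" and A: "A7 = B * C * transpose_mat B"
    using A7_carrier by auto
  have "3 \<le> k"
    using A7_factorization_inner_dim[of "B * C" k B] B C A by simp
  moreover have "k \<noteq> 3"
    using no_snt_factorization_A7_3 B C \<open>nonneg_mat B\<close> \<open>nonneg_mat C\<close> \<open>transpose_mat C = C\<close> A
    by blast
  ultimately show "4 \<le> k" by simp
qed

theorem mainTheorem7:
  shows "real_rank A7 = 3 \<and> nonneg_rank A7 = 3 \<and> snt_rank A7 = 4"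
  using real_rank_A7 nonneg_rank_A7 snt_rank_A7 by simp

end
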